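(* Let $G$ be a graph of order $n\ge 4$. Then $\tau(G)=n-2$ if and only if $G$ is isomorphic to one of: (a) the complete split graph $K_{n-2}\vee\overline{K_2}$; (b) $K_1\vee(K_1+K_{n-2})$; (c) the complete bipartite graph $K_{2,n-2}$; (d) $\overline{K_{n-2}}\vee K_2$.
   Context: Graphs are finite, simple, connected. $+$ denotes disjoint union, $\vee$ the join, $\overline{H}$ the complement. Two vertices $u,v$ are twins if $N(u)\setminus\{v\}=N(v)\setminus\{u\}$; the twin number $\tau(G)$ is the maximum cardinality of an equivalence class of the twin relation. *)

theory Defs
  imports Main
begin

definition simple_graph :: "'a set \<Rightarrow> ('a \<Rightarrow> 'a \<Rightarrow> bool) \<Rightarrow> bool" where
  "simple_graph V E \<longleftrightarrow> finite V \<and> V \<noteq> {} \<and>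
     (\<forall>u v. E u v \<longrightarrow> u \<in> V \<and> v \<in> V) \<and>
     (\<forall>u v. E u v \<longrightarrow> E v u) \<and> (\<forall>u. \<not> E u u)"

definition connected_graph :: "'a set \<Rightarrow> ('a \<Rightarrow> 'a \<Rightarrow> bool) \<Rightarrow> bool" where
  "connected_graph V E \<longleftrightarrow> simple_graph V E \<and> (\<forall>u\<in>V. \<forall>v\<in>V. E\<^sup>*\<^sup>* u v)"

definition nbhd :: "'a set \<Rightarrow> ('a \<Rightarrow> 'a \<Rightarrow> bool) \<Rightarrow> 'a \<Rightarrow> 'a set" where
  "nbhd V E u = {w \<in> V. E u w}"

definition twins :: "'a set \<Rightarrow> ('a \<Rightarrow> 'a \<Rightarrow> bool) \<Rightarrow> 'a \<Rightarrow> 'a \<Rightarrow> bool" where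
  "twins V E u v \<longleftrightarrow> nbhd V E u - {v} = nbhd V E v - {u}"

definition twin_class :: "'a set \<Rightarrow> ('a \<Rightarrow> 'a \<Rightarrow> bool) \<Rightarrow> 'a \<Rightarrow> 'a set" where
  "twin_class V E v = {u \<in> V. twins V E u v}"

definition twin_number :: "'a set \<Rightarrow> ('a \<Rightarrow> 'a \<Rightarrow> bool) \<Rightarrow> nat" where
  "twin_number V E = Max ((\<lambda>v. card (twin_class V E v)) ` V)"

definition graph_iso :: "'a set \<Rightarrow> ('a \<Rightarrow> 'a \<Rightarrow> bool) \<Rightarrow> 'b set \<Rightarrow> ('b \<Rightarrow> 'b \<Rightarrow> bool) \<Rightarrow> bool" where
  "graph_iso V E W F \<longleftrightarrow> (\<exists>f. bij_betw f V W \<and> (\<forall>u\<in>V. \<forall>v\<in>V. E u v \<longleftrightarrow> F (f u) (f v)))"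

(* K_{n-2} join complement K_2 : {0,1} independent, rest a clique, all joined *)
definition complete_split :: "nat \<Rightarrow> nat \<Rightarrow> nat \<Rightarrow> bool" where
  "complete_split n i j \<longleftrightarrow> i < n \<and> j < n \<and> i \<noteq> j \<and> \<not> (i < 2 \<and> j < 2)"

(* K_1 join (K_1 + K_{n-2}) : 0 universal, 1 only adjacent to 0, {2..n-1} clique *)
definition k1_join_k1_plus_k :: "nat \<Rightarrow> nat \<Rightarrow> nat \<Rightarrow> bool" where
  "k1_join_k1_plus_k n i j \<longleftrightarrow> i < n \<and> j < n \<and> i \<noteq> j \<and>
      (i = 0 \<or> j = 0 \<or> (2 \<le> i \<and> 2 \<le> j))"

(* K_{2,n-2} : parts {0,1} and {2..n-1} *)
definition complete_bip_2 :: "nat \<Rightarrow> nat \<Rightarrow> nat \<Rightarrow> bool" where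
  "complete_bip_2 n i j \<longleftrightarrow> i < n \<and> j < n \<and> ((i < 2) \<noteq> (j < 2))"

(* complement K_{n-2} join K_2 : {0,1} adjacent, {2..n-1} independent, all joined *)
definition empty_join_k2 :: "nat \<Rightarrow> nat \<Rightarrow> nat \<Rightarrow> bool" where
  "empty_join_k2 n i j \<longleftrightarrow> i < n \<and> j < n \<and> i \<noteq> j \<and> (i < 2 \<or> j < 2)"

end

theory Submission
  imports Defs
begin

text \<open>A twin class T of size n - 2 leaves exactly two vertices x, y outside. The vertices of T
  are pairwise twins, so T is a clique or an independent set and each of x, y is adjacent to all
  of T or to none of it: the graph is determined up to isomorphism by four bits. Maximality of
  the twin class T rules out the types in which x or y would be a twin of T, and connectivity
  rules out those in which x, y or T is cut off; the types that remain are those of the four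
  listed graphs, whose twin number is indeed n - 2.\<close>

lemma twins_iff:
  assumes "\<not> E u u" "\<not> E v v"
  shows "twins V E u v \<longleftrightarrow> (\<forall>z\<in>V - {u, v}. E u z \<longleftrightarrow> E v z)"
  using assms unfolding twins_def nbhd_def by blast

lemma twins_adjacent_iff:
  assumes "twins V E u w" "z \<in> V" "z \<noteq> u" "z \<noteq> w"
  shows "E u z \<longleftrightarrow> E w z"
  using assms unfolding twins_def nbhd_def by blast

lemma twins_sym: "twins V E u v \<Longrightarrow> twins V E v u"
  unfolding twins_def by simp

lemma twins_trans:
  assumes G: "simple_graph V E" and uv: "twins V E u v" and vw: "twins V E v w"
  shows "twins V E u w"
proof -
  have irr: "\<And>u. \<not> E u u" and sym: "\<And>u v. E u v \<Longrightarrow> E v u"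
    and supp: "\<And>u v. E u v \<Longrightarrow> u \<in> V \<and> v \<in> V"
    using G unfolding simple_graph_def by blast+
  have "E u z \<longleftrightarrow> E w z" if z: "z \<in> V - {u, w}" for z
  proof (cases "z = v \<and> u \<noteq> v \<and> v \<noteq> w")
    case True
    then show ?thesis
      using twins_adjacent_iff[OF uv, of w] twins_adjacent_iff[OF vw, of u] sym supp z by blast
  next
    case False
    then show ?thesis using twins_adjacent_iff[OF uv] twins_adjacent_iff[OF vw] z by blast
  qed
  then show ?thesis using twins_iff[of E u w V] irr by blast
qed

lemma twin_class_pairwise_twins:
  assumes "simple_graph V E" "u \<in> twin_class V E v" "w \<in> twin_class V E v"
  shows "twins V E u w"
  using twins_trans[OF assms(1) _ twins_sym] assms(2,3) unfolding twin_class_def by blast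

definition pair_type ::
    "'a set \<Rightarrow> ('a \<Rightarrow> 'a \<Rightarrow> bool) \<Rightarrow> 'a \<Rightarrow> 'a \<Rightarrow> bool \<Rightarrow> bool \<Rightarrow> bool \<Rightarrow> bool \<Rightarrow> bool" where
  "pair_type V E x y c a b e \<longleftrightarrow> x \<in> V \<and> y \<in> V \<and> x \<noteq> y \<and> (\<forall>u\<in>V. \<not> E u u) \<and>
     (\<forall>t\<in>V - {x, y}. \<forall>t'\<in>V - {x, y}. t \<noteq> t' \<longrightarrow> E t t' = c) \<and>
     (\<forall>t\<in>V - {x, y}. E x t = a \<and> E t x = a \<and> E y t = b \<and> E t y = b) \<and>
     E x y = e \<and> E y x = e"

lemma pair_type_swap: "pair_type V E x y c a b e \<Longrightarrow> pair_type V E y x c b a e"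
  unfolding pair_type_def by (simp add: insert_commute) blast

lemma pair_type_adjacency:
  assumes "pair_type V E x y c a b e" "u \<in> V" "v \<in> V"
  shows "E u v \<longleftrightarrow>
    (if u = v then False else if u \<in> {x, y} \<and> v \<in> {x, y} then e
     else if u = x \<or> v = x then a else if u = y \<or> v = y then b else c)"
  using assms unfolding pair_type_def by auto

lemma pair_type_twins_inner:
  assumes P: "pair_type V E x y c a b e" and "t \<in> V - {x, y}" "t' \<in> V - {x, y}"
  shows "twins V E t t'"
proof -
  have "\<not> E t t" "\<not> E t' t'" using assms unfolding pair_type_def by auto
  moreover have "E t z \<longleftrightarrow> E t' z" if "z \<in> V - {t, t'}" for z
    using P assms(2,3) that unfolding pair_type_def by (cases "z = x \<or> z = y") auto
  ultimately show ?thesis using twins_iff by metis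
qed

lemma pair_type_twins_iff:
  assumes P: "pair_type V E x y c a b e" and t: "t \<in> V - {x, y}"
    and t': "t' \<in> V - {x, y}" "t' \<noteq> t"
  shows "twins V E x t \<longleftrightarrow> a = c \<and> e = b"
proof -
  have "\<not> E x x" "\<not> E t t" and "V - {x, t} = insert y (V - {x, y, t})"
    using P t unfolding pair_type_def by auto
  then have "twins V E x t \<longleftrightarrow> (\<forall>z\<in>insert y (V - {x, y, t}). E x z \<longleftrightarrow> E t z)"
    using twins_iff[of E x t V] by simp
  moreover have "E x y = e" "E t y = b" using P t unfolding pair_type_def by auto
  moreover have "E x z = a \<and> E t z = c" if "z \<in> V - {x, y, t}" for z
    using P t that unfolding pair_type_def by auto
  ultimately show ?thesis using t' by auto
qed

lemma pair_type_twin_class: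
  assumes P: "pair_type V E x y c a b e"
    and x_not_twin: "\<not> (a = c \<and> e = b)" and y_not_twin: "\<not> (b = c \<and> e = a)"
    and t: "t \<in> V - {x, y}" and t': "t' \<in> V - {x, y}" "t' \<noteq> t"
  shows "twin_class V E t = V - {x, y}"
proof -
  have "\<not> twins V E x t"
    using pair_type_twins_iff[OF P t t'] x_not_twin by simp
  moreover have "\<not> twins V E y t"
    using pair_type_twins_iff[OF pair_type_swap[OF P]] t t' y_not_twin by (simp add: insert_commute)
  moreover have "twins V E u t" if "u \<in> V - {x, y}" for u
    using pair_type_twins_inner[OF P that t] .
  ultimately have "twins V E u t \<longleftrightarrow> u \<in> V - {x, y}" if "u \<in> V" for u
    using that twins_sym by blast
  then show ?thesis unfolding twin_class_def by blast
qed

lemma pair_type_twin_number: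
  assumes P: "pair_type V E x y c a b e" and fin: "finite V" and card: "card V \<ge> 4"
    and x_not_twin: "\<not> (a = c \<and> e = b)" and y_not_twin: "\<not> (b = c \<and> e = a)"
  shows "twin_number V E = card V - 2"
proof -
  have xy: "x \<in> V" "y \<in> V" "x \<noteq> y" using P unfolding pair_type_def by auto
  then have card_T: "card (V - {x, y}) = card V - 2" using fin by (simp add: card_Diff_subset)
  with card have "\<not> card (V - {x, y}) \<le> Suc 0" by simp
  then obtain t t' where t: "t \<in> V - {x, y}" and t': "t' \<in> V - {x, y}" "t' \<noteq> t"
    using card_le_Suc0_iff_eq[of "V - {x, y}"] fin by blast
  have class_T: "twin_class V E s = V - {x, y}" if "s \<in> V - {x, y}" for s
  proof -
    obtain s' where "s' \<in> V - {x, y}" "s' \<noteq> s" using t t' by blast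
    then show ?thesis using pair_type_twin_class[OF P x_not_twin y_not_twin that] by blast
  qed
  have "card (twin_class V E v) \<le> card V - 2" if v: "v \<in> V" for v
  proof (cases "v \<in> V - {x, y}")
    case True
    then show ?thesis using class_T card_T by simp
  next
    case False
    have "twin_class V E v \<subseteq> {x, y}"
    proof
      fix u assume u: "u \<in> twin_class V E v"
      show "u \<in> {x, y}"
      proof (rule ccontr)
        assume "u \<notin> {x, y}"
        then have "u \<in> V - {x, y}" using u unfolding twin_class_def by blast
        moreover have "v \<in> twin_class V E u" using u v unfolding twin_class_def by (auto intro: twins_sym)
        ultimately show False using class_T False by blast
      qed
    qed
    then have "card (twin_class V E v) \<le> card {x, y}" by (intro card_mono) auto
    then have "card (twin_class V E v) \<le> 2" using xy(3) by simp
    then show ?thesis using card by linarith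
  qed
  moreover have "card V - 2 \<in> (\<lambda>v. card (twin_class V E v)) ` V"
    using class_T t card_T by (metis Diff_iff image_eqI)
  ultimately show ?thesis
    unfolding twin_number_def using fin by (intro Max_eqI) auto
qed

lemma graph_iso_pair_type:
  assumes iso: "graph_iso V E W F" and P: "pair_type W F x' y' c a b e"
  shows "\<exists>x y. pair_type V E x y c a b e"
proof -
  obtain f where bij: "bij_betw f V W" and pres: "\<And>u v. u \<in> V \<Longrightarrow> v \<in> V \<Longrightarrow> E u v \<longleftrightarrow> F (f u) (f v)"
    using iso unfolding graph_iso_def by blast
  have "x' \<in> W" "y' \<in> W" using P unfolding pair_type_def by auto
  then obtain x y where x: "x \<in> V" "f x = x'" and y: "y \<in> V" "f y = y'"
    using bij unfolding bij_betw_def by (metis imageE)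
  have inner: "f t \<in> W - {x', y'}" if "t \<in> V - {x, y}" for t
    using bij that x y unfolding bij_betw_def inj_on_def by blast
  moreover have "f t \<noteq> f t'" if "t \<in> V" "t' \<in> V" "t \<noteq> t'" for t t'
    using bij that unfolding bij_betw_def inj_on_def by blast
  ultimately have "pair_type V E x y c a b e"
    using P x y unfolding pair_type_def by (auto simp: pres)
  then show ?thesis by blast
qed

lemma pair_type_graph_iso:
  assumes P: "pair_type V E x y c a b e" and Q: "pair_type W F x' y' c a b e"
    and fin: "finite W" and card: "card V = card W"
  shows "graph_iso V E W F"
proof -
  have xy: "x \<in> V" "y \<in> V" "x \<noteq> y" and xy': "x' \<in> W" "y' \<in> W" "x' \<noteq> y'"
    using P Q unfolding pair_type_def by auto
  have "card W > 0" using fin xy'(1) card_gt_0_iff by blast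
  then have "finite V" using card card_gt_0_iff by metis
  then have "card (V - {x, y}) = card (W - {x', y'})"
    using fin card xy xy' by (simp add: card_Diff_subset)
  then obtain g where g: "bij_betw g (V - {x, y}) (W - {x', y'})"
    using finite_same_card_bij \<open>finite V\<close> fin by blast
  define f where "f = g(x := x', y := y')"
  have "bij_betw f (V - {x, y}) (W - {x', y'})"
    using g by (rule bij_betw_cong[THEN iffD1, rotated]) (simp add: f_def)
  moreover have "bij_betw f {x, y} {x', y'}"
    using xy(3) xy'(3) by (simp add: f_def bij_betw_def)
  ultimately have "bij_betw f ((V - {x, y}) \<union> {x, y}) ((W - {x', y'}) \<union> {x', y'})"
    by (rule bij_betw_combine) blast
  moreover have "(V - {x, y}) \<union> {x, y} = V" "(W - {x', y'}) \<union> {x', y'} = W"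
    using xy xy' by auto
  ultimately have bij: "bij_betw f V W" by simp
  have "f u = x' \<longleftrightarrow> u = x" "f u = y' \<longleftrightarrow> u = y" if "u \<in> V" for u
    using bij_betw_apply[OF g, of u] that xy(3) xy'(3) unfolding f_def by auto
  moreover have "f u = f v \<longleftrightarrow> u = v" if "u \<in> V" "v \<in> V" for u v
    using bij that unfolding bij_betw_def inj_on_def by blast
  moreover have "f u \<in> W" if "u \<in> V" for u
    using bij that unfolding bij_betw_def by blast
  ultimately have "E u v \<longleftrightarrow> F (f u) (f v)" if "u \<in> V" "v \<in> V" for u v
    using that by (simp add: pair_type_adjacency[OF P] pair_type_adjacency[OF Q])
  with bij show ?thesis unfolding graph_iso_def by blast
qed

lemma graph_iso_iff_pair_type:
  assumes "pair_type W F x' y' c a b e" "finite W" "card V = card W"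
  shows "graph_iso V E W F \<longleftrightarrow> (\<exists>x y. pair_type V E x y c a b e)"
  using assms graph_iso_pair_type pair_type_graph_iso by metis

lemma pairwise_twins_pair_type:
  assumes G: "simple_graph V E" and xy: "x \<in> V" "y \<in> V" "x \<noteq> y"
    and twins: "\<And>u w. u \<in> V - {x, y} \<Longrightarrow> w \<in> V - {x, y} \<Longrightarrow> twins V E u w"
    and v: "v \<in> V - {x, y}" and v': "v' \<in> V - {x, y}" "v' \<noteq> v"
  shows "pair_type V E x y (E v v') (E x v) (E y v) (E x y)"
proof -
  have irr: "\<And>u. \<not> E u u" and sym: "\<And>u w. E u w \<Longrightarrow> E w u"
    using G unfolding simple_graph_def by blast+
  have from_v: "E v w = E v v'" if "w \<in> V - {x, y}" "w \<noteq> v" for w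
  proof (cases "w = v'")
    case False
    have "v \<in> V" using v by blast
    then have "E w v = E v' v"
      using twins_adjacent_iff[OF twins[OF that(1) v'(1)] _ that(2)[symmetric] v'(2)[symmetric]] by blast
    then show ?thesis using sym by blast
  qed simp
  have inner: "E s s' = E v v'" if "s \<in> V - {x, y}" "s' \<in> V - {x, y}" "s \<noteq> s'" for s s'
  proof (cases "s = v \<or> s' = v")
    case True
    then show ?thesis using from_v that sym by metis
  next
    case False
    then have "E s s' = E v s'" using twins_adjacent_iff[OF twins[OF that(1) v]] that by blast
    also have "\<dots> = E v v'" using from_v[OF that(2)] False by simp
    finally show ?thesis .
  qed
  have outer: "E t z = E v z \<and> E z t = E v z" if "t \<in> V - {x, y}" "z \<in> {x, y}" for t z
  proof -
    have "z \<in> V" "z \<noteq> t" "z \<noteq> v" using that xy v by auto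
    then have "E t z = E v z" by (rule twins_adjacent_iff[OF twins[OF that(1) v]])
    then show ?thesis using sym by blast
  qed
  have "E y x = E x y" using sym by blast
  with inner outer show ?thesis
    unfolding pair_type_def using xy irr sym by blast
qed

lemma connected_graph_edge_closed:
  assumes C: "connected_graph V E" and u: "u \<in> V" "u \<in> S" and v: "v \<in> V"
    and closed: "\<And>s t. s \<in> S \<Longrightarrow> E s t \<Longrightarrow> t \<in> S"
  shows "v \<in> S"
proof -
  have "E\<^sup>*\<^sup>* u v" using C u v unfolding connected_graph_def by blast
  then show ?thesis
    by (induction rule: rtranclp_induct) (use u(2) closed in blast)+
qed

lemma pair_type_connected_joined:
  assumes C: "connected_graph V E" and P: "pair_type V E x y c a b e" and t: "t \<in> V - {x, y}"
  shows "a \<or> b"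
proof (rule ccontr)
  assume "\<not> (a \<or> b)"
  moreover have "w \<in> V" if "E s w" for s w
    using C that unfolding connected_graph_def simple_graph_def by blast
  ultimately have "\<And>s w. s \<in> V - {x, y} \<Longrightarrow> E s w \<Longrightarrow> w \<in> V - {x, y}"
    using P unfolding pair_type_def by blast
  moreover have "x \<in> V" "x \<notin> V - {x, y}" using P unfolding pair_type_def by auto
  ultimately show False
    using connected_graph_edge_closed[OF C _ t] t by blast
qed

lemma pair_type_connected_first_not_isolated:
  assumes C: "connected_graph V E" and P: "pair_type V E x y c a b e" and t: "t \<in> V - {x, y}"
  shows "a \<or> e"
proof (rule ccontr)
  assume "\<not> (a \<or> e)"
  moreover have "w \<in> V" if "E s w" for s w
    using C that unfolding connected_graph_def simple_graph_def by blast
  ultimately have "\<And>w. E x w \<Longrightarrow> w \<in> {x}"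
    using P unfolding pair_type_def by blast
  moreover have "x \<in> V" using P unfolding pair_type_def by auto
  ultimately show False
    using connected_graph_edge_closed[OF C, of x "{x}" t] t by blast
qed

lemma twin_number_card_minus_two_pair_type:
  assumes C: "connected_graph V E" and card: "card V \<ge> 4"
    and tn: "twin_number V E = card V - 2"
  obtains x y c a b e where "pair_type V E x y c a b e"
    and "\<not> (a = c \<and> e = b)" and "\<not> (b = c \<and> e = a)"
proof -
  have G: "simple_graph V E" using C unfolding connected_graph_def by blast
  then have fin: "finite V" and ne: "V \<noteq> {}" unfolding simple_graph_def by blast+
  then have "twin_number V E \<in> (\<lambda>v. card (twin_class V E v)) ` V"
    unfolding twin_number_def by (intro Max_in) auto
  then obtain v where v: "v \<in> V" and "card (twin_class V E v) = twin_number V E" by auto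
  with tn have card_T: "card (twin_class V E v) = card V - 2" by simp
  define T where "T = twin_class V E v"
  have TV: "T \<subseteq> V" and vT: "v \<in> T" unfolding T_def twin_class_def twins_def using v by auto
  have "card (V - T) = 2"
    using card_T card card_Diff_subset[OF finite_subset[OF TV fin] TV] unfolding T_def by simp
  then obtain x y where "x \<noteq> y" and VT: "V - T = {x, y}" by (auto simp: card_2_iff)
  then have xy: "x \<in> V" "y \<in> V" "x \<noteq> y" and T: "T = V - {x, y}" using TV by auto
  have "\<not> card T \<le> Suc 0" using card_T card unfolding T_def by simp
  then obtain v' where v': "v' \<in> T" "v' \<noteq> v"
    using vT card_le_Suc0_iff_eq[OF finite_subset[OF TV fin]] by blast
  have twins: "twins V E u w" if "u \<in> V - {x, y}" "w \<in> V - {x, y}" for u w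
    using twin_class_pairwise_twins[OF G] that unfolding T[symmetric] T_def by blast
  define c a b e where "c = E v v'" and "a = E x v" and "b = E y v" and "e = E x y"
  have P: "pair_type V E x y c a b e"
    unfolding c_def a_def b_def e_def
    using pairwise_twins_pair_type[OF G xy twins] vT v' unfolding T by blast
  have "x \<notin> twin_class V E v" "y \<notin> twin_class V E v" using T unfolding T_def by auto
  then have "\<not> twins V E x v" "\<not> twins V E y v" using xy unfolding twin_class_def by auto
  then have "\<not> (a = c \<and> e = b)" "\<not> (b = c \<and> e = a)"
    using pair_type_twins_iff[OF P, of v v'] pair_type_twins_iff[OF pair_type_swap[OF P], of v v']
      vT v' unfolding T by (auto simp: insert_commute)
  with P that show thesis by blast
qed

lemma twin_number_card_minus_two_iff:
  assumes C: "connected_graph V E" and card: "card V \<ge> 4"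
  shows "twin_number V E = card V - 2 \<longleftrightarrow>
    (\<exists>x y. pair_type V E x y True True True False) \<or>
    (\<exists>x y. pair_type V E x y True True False True) \<or>
    (\<exists>x y. pair_type V E x y False True True False) \<or>
    (\<exists>x y. pair_type V E x y False True True True)"
    (is "_ \<longleftrightarrow> ?types")
proof -
  have fin: "finite V" using C unfolding connected_graph_def simple_graph_def by blast
  show ?thesis
  proof
    assume "twin_number V E = card V - 2"
    then obtain x y c a b e where P: "pair_type V E x y c a b e"
      and twin_free: "\<not> (a = c \<and> e = b)" "\<not> (b = c \<and> e = a)"
      using twin_number_card_minus_two_pair_type[OF C card] by blast
    have "x \<in> V" "y \<in> V" "x \<noteq> y" using P unfolding pair_type_def by auto
    then have "card (V - {x, y}) > 0" using fin card by (simp add: card_Diff_subset)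
    then obtain t where t: "t \<in> V - {x, y}" by (metis card_gt_0_iff ex_in_conv)
    have "a \<or> b" "a \<or> e" "b \<or> e"
      using pair_type_connected_joined[OF C P t] pair_type_connected_first_not_isolated[OF C P t]
        pair_type_connected_first_not_isolated[OF C pair_type_swap[OF P]] t
      by (auto simp: insert_commute)
    \<comment> \<open>Five bit patterns survive; swapping x and y identifies (c, \<not>a, b, e) with (c, a, \<not>b, e).\<close>
    then show ?types
      using P pair_type_swap[OF P] twin_free by (cases a; cases b; cases c; cases e) auto
  next
    assume ?types
    then obtain x y c a b e where P: "pair_type V E x y c a b e"
      and twin_free: "\<not> (a = c \<and> e = b)" "\<not> (b = c \<and> e = a)" by blast
    show "twin_number V E = card V - 2" using pair_type_twin_number[OF P fin card twin_free] .
  qed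
qed

lemma pair_type_complete_split:
  "2 \<le> n \<Longrightarrow> pair_type {0..<n} (complete_split n) 0 1 True True True False"
  unfolding pair_type_def complete_split_def by auto

lemma pair_type_k1_join_k1_plus_k:
  "2 \<le> n \<Longrightarrow> pair_type {0..<n} (k1_join_k1_plus_k n) 0 1 True True False True"
  unfolding pair_type_def k1_join_k1_plus_k_def by auto

lemma pair_type_complete_bip_2:
  "2 \<le> n \<Longrightarrow> pair_type {0..<n} (complete_bip_2 n) 0 1 False True True False"
  unfolding pair_type_def complete_bip_2_def by auto

lemma pair_type_empty_join_k2:
  "2 \<le> n \<Longrightarrow> pair_type {0..<n} (empty_join_k2 n) 0 1 False True True True"
  unfolding pair_type_def empty_join_k2_def by auto

theorem proposition5:
  fixes V :: "'a set" and E :: "'a \<Rightarrow> 'a \<Rightarrow> bool" and n :: nat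
  assumes "connected_graph V E" and "card V = n" and "n \<ge> 4"
  shows "twin_number V E = n - 2 \<longleftrightarrow>
    (graph_iso V E {0..<n} (complete_split n) \<or>
     graph_iso V E {0..<n} (k1_join_k1_plus_k n) \<or>
     graph_iso V E {0..<n} (complete_bip_2 n) \<or>
     graph_iso V E {0..<n} (empty_join_k2 n))"
proof -
  have n: "2 \<le> n" "finite {0..<n}" "card V = card {0..<n}" using assms(2,3) by simp_all
  note model_iff = graph_iso_iff_pair_type[OF _ n(2,3)]
  show ?thesis
    using twin_number_card_minus_two_iff[OF assms(1)] assms(2,3)
      model_iff[OF pair_type_complete_split[OF n(1)]]
      model_iff[OF pair_type_k1_join_k1_plus_k[OF n(1)]]
      model_iff[OF pair_type_complete_bip_2[OF n(1)]]
      model_iff[OF pair_type_empty_join_k2[OF n(1)]]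
    by simp
qed

end
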